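(* Consider the problem $\min_{x\in\mathbb{R}^n} f(x):=F(x)+h(x)$, where $h:\mathbb{R}^n\to\mathbb{R}\cup\{+\infty\}$ is a proper closed convex function, $F:\mathbb{R}^n\to\mathbb{R}$ is lower semicontinuous (possibly nonconvex), $\mathrm{dom}\, f=\mathrm{dom}\, h$, and there is $f_\infty>-\infty$ with $f(x)\ge f_\infty$ for all $x\in\mathrm{dom}\, f$. Fix $q\in[0,2)$ and $\rho>0$. Let $x_0\in\mathrm{dom}\, h$ and let the sequence $(x_k)_{k\ge0}$ be generated by $$x_{k+1}=\mathrm{prox}_{\alpha_k h}\big(x_k-\alpha_k g_k\big),\qquad \mathrm{prox}_{\gamma h}(z):=\arg\min_{y\in\mathrm{dom}\, h}\Big\{h(y)+\tfrac{1}{2\gamma}\|z-y\|^2\Big\},$$ where at each iteration $k$ the vector $g_k$ and numbers $\delta_k\ge 0$, $L_k>0$ satisfy $$F(x)-\big(F(x_k)+\langle g_k,x-x_k\rangle\big)\le \frac{L_k}{2}\|x-x_k\|^2+\delta_k\|x-x_k\|^q\quad\text{for all } x\in\mathrm{dom}\, f,$$ and the step sizes satisfy $0<\alpha_k\le \frac{1}{L_k+q\rho}$. Then for every $j\ge 0$ the vector $p_{j+1}:=-\frac{1}{\alpha_j}(x_{j+1}-x_j)-g_j$ belongs to $\partial h(x_{j+1})$, and for all $k\ge0$, $$\sum_{j=0}^{k}\frac{\alpha_j}{2}\,\|g_j+p_{j+1}\|^2\le f(x_0)-f_\infty+\frac{\sum_{j=0}^{k}(2-q)\,\delta_j^{\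frac{2}{2-q}}}{2\rho^{\frac{q}{2-q}}}.$$
   Context: $\|\cdot\|$ is the Euclidean norm and $\partial h$ the (convex) subdifferential of $h$. The inequality required of $g_k$ says that $F$ is equipped at $x_k$ with an "inexact first-order $(\delta_k,L_k)$-oracle of degree $q$"; the vector $g_k+p_{k+1}$ is called the gradient mapping at iteration $k$. *)

theory Defs
  imports "HOL-Analysis.Analysis" "HOL-Library.Extended_Real"
begin

definition edom :: "('a \<Rightarrow> ereal) \<Rightarrow> 'a set" where
  "edom h = {x. h x < \<infinity>}"

definition proper_fun :: "('a \<Rightarrow> ereal) \<Rightarrow> bool" where
  "proper_fun h \<longleftrightarrow> (\<forall>x. h x \<noteq> -\<infinity>) \<and> (\<exists>x. h x < \<infinity>)"

definition epigraph :: "('a \<Rightarrow> ereal) \<Rightarrow> ('a \<times> real) set" where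
  "epigraph h = {(x, t). h x \<le> ereal t}"

definition convex_fun :: "('a::real_vector \<Rightarrow> ereal) \<Rightarrow> bool" where
  "convex_fun h \<longleftrightarrow> convex (epigraph h)"

definition closed_fun :: "('a::topological_space \<Rightarrow> ereal) \<Rightarrow> bool" where
  "closed_fun h \<longleftrightarrow> closed (epigraph h)"

definition lsc :: "('a::topological_space \<Rightarrow> real) \<Rightarrow> bool" where
  "lsc F \<longleftrightarrow> (\<forall>c. closed {x. F x \<le> c})"

definition subdiff :: "('a::real_inner \<Rightarrow> ereal) \<Rightarrow> 'a \<Rightarrow> 'a set" where
  "subdiff h x = {v. \<forall>y. h y \<ge> h x + ereal (v \<bullet> (y - x))}"

definition prox_set :: "real \<Rightarrow> ('a::real_normed_vector \<Rightarrow> ereal) \<Rightarrow> 'a \<Rightarrow> 'a set" where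
  "prox_set \<gamma> h z = {y \<in> edom h. \<forall>w \<in> edom h.
      h y + ereal (1 / (2 * \<gamma>) * (norm (z - y))\<^sup>2) \<le> h w + ereal (1 / (2 * \<gamma>) * (norm (z - w))\<^sup>2)}"

end

theory Submission imports Defs begin

text \<open>Each proximal step is a descent step for \<open>F + h\<close> up to an error term. The prox optimality
  condition yields a subgradient \<open>p\<close> of \<open>h\<close> at the new point, so the convexity of \<open>h\<close> and the
  inexact first-order model of \<open>F\<close> bound the increase of the objective by
  \<open>(L/2 - 1/\<alpha>) \<parallel>x' - x\<parallel>\<^sup>2 + \<delta> \<parallel>x' - x\<parallel>\<^sup>q\<close>; Young's inequality with exponents \<open>2/q\<close> and \<open>2/(2 - q)\<close>
  trades \<open>\<delta> \<parallel>x' - x\<parallel>\<^sup>q\<close> for \<open>q\<rho>/2 \<parallel>x' - x\<parallel>\<^sup>2\<close> plus a constant, and the step size rule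
  \<open>\<alpha> \<le> 1/(L + q\<rho>)\<close> leaves a decrease of \<open>\<alpha>/2 \<parallel>g + p\<parallel>\<^sup>2\<close>. Summing telescopes against the lower
  bound \<open>f\<^sub>\<infinity>\<close>.\<close>

lemma Young_powr_quadratic:
  fixes q \<rho> \<delta> n :: real
  assumes q: "0 \<le> q" "q < 2" and \<rho>: "\<rho> > 0" and \<delta>: "\<delta> \<ge> 0" and n: "n \<ge> 0"
  shows "\<delta> * n powr q
           \<le> q * \<rho> / 2 * n\<^sup>2 + (2 - q) * \<delta> powr (2 / (2 - q)) / (2 * \<rho> powr (q / (2 - q)))"
proof (cases "q = 0")
  case True
  then show ?thesis using \<delta> \<rho> by (cases "\<delta> = 0") auto
next
  case False
  define a where "a = \<rho> powr (q / 2) * n powr q"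
  define b where "b = \<delta> / \<rho> powr (q / 2)"
  have "\<delta> * n powr q = a * b" using \<rho> by (simp add: a_def b_def)
  also have "\<dots> \<le> a powr (2 / q) / (2 / q) + b powr (2 / (2 - q)) / (2 / (2 - q))"
    using False q \<rho> \<delta> by (intro Youngs_inequality) (auto simp: a_def b_def field_simps)
  also have "a powr (2 / q) = \<rho> * n\<^sup>2"
    using False q \<rho> n by (simp add: a_def powr_mult powr_powr powr_numeral)
  also have "b powr (2 / (2 - q)) = \<delta> powr (2 / (2 - q)) / \<rho> powr (q / (2 - q))"
    using q \<rho> \<delta> by (simp add: b_def powr_divide powr_powr)
  finally show ?thesis using False q by (simp add: field_simps)
qed

lemma proper_fun_edom_ereal:
  assumes "proper_fun h" "x \<in> edom h"
  shows "h x = ereal (real_of_ereal (h x))"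
  using assms by (cases "h x") (auto simp: proper_fun_def edom_def)

lemma convex_fun_combination_le:
  fixes h :: "'a::real_vector \<Rightarrow> ereal"
  assumes "convex_fun h" "h x = ereal a" "h y = ereal b" "0 \<le> t" "t \<le> 1"
  shows "h ((1 - t) *\<^sub>R x + t *\<^sub>R y) \<le> ereal ((1 - t) * a + t * b)"
proof -
  have "(x, a) \<in> epigraph h" "(y, b) \<in> epigraph h" using assms by (auto simp: epigraph_def)
  then have "(1 - t) *\<^sub>R (x, a) + t *\<^sub>R (y, b) \<in> epigraph h"
    using assms(1,4,5) unfolding convex_fun_def by (intro convexD) auto
  then show ?thesis by (simp add: epigraph_def)
qed

lemma le_of_le_add_mult_at_right_0:
  fixes a b K :: real
  assumes "\<And>t. 0 < t \<Longrightarrow> t < 1 \<Longrightarrow> a \<le> b + t * K"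
  shows "a \<le> b"
proof (rule tendsto_le[OF trivial_limit_at_right_real])
  show "((\<lambda>t. b + t * K) \<longlongrightarrow> b) (at_right 0)"
    by (rule tendsto_eq_intros refl | simp)+
  show "((\<lambda>t. a) \<longlongrightarrow> a) (at_right 0)" by simp
  show "\<forall>\<^sub>F t in at_right 0. a \<le> b + t * K"
    using eventually_at_right_real[of 0 "1::real"] by (rule eventually_mono) (use assms in auto)
qed

lemma prox_set_subdiff:
  fixes h :: "'a::real_inner \<Rightarrow> ereal"
  assumes proper: "proper_fun h" and convex: "convex_fun h" and \<gamma>: "\<gamma> > 0"
    and prox: "y' \<in> prox_set \<gamma> h z"
  shows "(1 / \<gamma>) *\<^sub>R (z - y') \<in> subdiff h y'"
  unfolding subdiff_def
proof (intro CollectI allI)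
  fix y
  define c where "c = 1 / (2 * \<gamma>)"
  have "y' \<in> edom h"
    and opt: "\<And>w. w \<in> edom h \<Longrightarrow> h y' + ereal (c * (norm (z - y'))\<^sup>2) \<le> h w + ereal (c * (norm (z - w))\<^sup>2)"
    using prox by (auto simp: prox_set_def c_def)
  then obtain a where a: "h y' = ereal a" using proper_fun_edom_ereal[OF proper] by blast
  show "h y' + ereal ((1 / \<gamma>) *\<^sub>R (z - y') \<bullet> (y - y')) \<le> h y"
  proof (cases "y \<in> edom h")
    case False
    then show ?thesis by (simp add: edom_def)
  next
    case True
    then obtain b where b: "h y = ereal b" using proper_fun_edom_ereal[OF proper] by blast
    define d where "d = y - y'"
    \<comment> \<open>Test the prox optimality of \<open>y'\<close> against \<open>y' + t d\<close> and let \<open>t \<rightarrow> 0\<close>.\<close>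
    have "a + 2 * c * ((z - y') \<bullet> d) \<le> b + t * (c * (norm d)\<^sup>2)" if t: "0 < t" "t < 1" for t
    proof -
      define yt where "yt = (1 - t) *\<^sub>R y' + t *\<^sub>R y"
      have hyt: "h yt \<le> ereal ((1 - t) * a + t * b)"
        unfolding yt_def using convex_fun_combination_le[OF convex a b] t by auto
      then have "yt \<in> edom h" by (auto simp: edom_def)
      from opt[OF this] hyt a
      have "a + c * (norm (z - y'))\<^sup>2 \<le> (1 - t) * a + t * b + c * (norm (z - yt))\<^sup>2"
        by (cases "h yt") auto
      moreover have "(norm (z - yt))\<^sup>2 = (norm (z - y'))\<^sup>2 - 2 * t * ((z - y') \<bullet> d) + t\<^sup>2 * (norm d)\<^sup>2"
        unfolding yt_def d_def power2_norm_eq_inner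
        by (simp add: algebra_simps inner_commute power2_eq_square)
      ultimately have "t * a \<le> t * b - 2 * c * t * ((z - y') \<bullet> d) + c * t\<^sup>2 * (norm d)\<^sup>2"
        by (simp add: algebra_simps)
      then have "t * (a + 2 * c * ((z - y') \<bullet> d)) \<le> t * (b + t * (c * (norm d)\<^sup>2))"
        by (simp add: algebra_simps power2_eq_square)
      then show ?thesis using t by simp
    qed
    then have "a + 2 * c * ((z - y') \<bullet> d) \<le> b"
      by (rule le_of_le_add_mult_at_right_0)
    then show ?thesis using a b \<gamma> by (simp add: c_def d_def)
  qed
qed

lemma prox_grad_step_decrease:
  fixes F :: "'a::real_inner \<Rightarrow> real" and h :: "'a \<Rightarrow> ereal"
  assumes proper: "proper_fun h" and convex: "convex_fun h"
    and x: "h x = ereal a" and prox: "x' \<in> prox_set \<alpha> h (x - \<alpha> *\<^sub>R g)"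
    and model: "F x' - (F x + g \<bullet> (x' - x)) \<le> L / 2 * (norm (x' - x))\<^sup>2 + \<delta> * norm (x' - x) powr q"
    and \<alpha>: "0 < \<alpha>" "\<alpha> \<le> 1 / (L + q * \<rho>)"
    and q: "0 \<le> q" "q < 2" and \<rho>: "\<rho> > 0" and \<delta>: "\<delta> \<ge> 0"
  shows "\<alpha> / 2 * (norm ((1 / \<alpha>) *\<^sub>R (x' - x)))\<^sup>2
           \<le> F x + a - (F x' + real_of_ereal (h x'))
              + (2 - q) * \<delta> powr (2 / (2 - q)) / (2 * \<rho> powr (q / (2 - q)))"
proof -
  define n where "n = norm (x' - x)"
  define C where "C = (2 - q) * \<delta> powr (2 / (2 - q)) / (2 * \<rho> powr (q / (2 - q)))"
  define p where "p = (1 / \<alpha>) *\<^sub>R ((x - \<alpha> *\<^sub>R g) - x')"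
  have "x' \<in> edom h" using prox by (simp add: prox_set_def)
  then obtain b where b: "h x' = ereal b" using proper_fun_edom_ereal[OF proper] by blast
  have "p \<in> subdiff h x'"
    unfolding p_def using prox_set_subdiff[OF proper convex \<alpha>(1) prox] .
  then have "h x' + ereal (p \<bullet> (x - x')) \<le> h x" by (simp add: subdiff_def)
  moreover have "p \<bullet> (x - x') = n\<^sup>2 / \<alpha> + g \<bullet> (x' - x)"
    using \<alpha>(1) unfolding p_def n_def power2_norm_eq_inner
    by (simp add: algebra_simps inner_commute divide_simps)
  ultimately have subgrad: "b + n\<^sup>2 / \<alpha> + g \<bullet> (x' - x) \<le> a" using x b by simp
  have Young: "\<delta> * n powr q \<le> q * \<rho> / 2 * n\<^sup>2 + C"
    unfolding C_def n_def using Young_powr_quadratic[OF q \<rho> \<delta>] by simp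
  have "L + q * \<rho> > 0"
  proof (rule ccontr)
    assume "\<not> L + q * \<rho> > 0"
    then have "1 / (L + q * \<rho>) \<le> 0" by simp
    with \<alpha> show False by linarith
  qed
  then have "\<alpha> * (L + q * \<rho>) \<le> 1"
    using \<alpha> by (simp add: field_simps)
  then have "\<alpha> * (L + q * \<rho>) * n\<^sup>2 \<le> 1 * n\<^sup>2"
    by (rule mult_right_mono) simp
  then have step: "(L + q * \<rho>) * n\<^sup>2 \<le> n\<^sup>2 / \<alpha>"
    using \<alpha>(1) by (simp add: field_simps)
  have "\<alpha> / 2 * (norm ((1 / \<alpha>) *\<^sub>R (x' - x)))\<^sup>2 = n\<^sup>2 / (2 * \<alpha>)"
    using \<alpha>(1) unfolding norm_scaleR n_def by (simp add: power2_eq_square field_simps)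
  also have "\<dots> \<le> F x + a - (F x' + b) + C"
    using subgrad model Young step by (simp add: n_def field_simps)
  finally show ?thesis using b by (simp add: C_def)
qed

lemma sum_le_of_telescoping_descent:
  fixes a \<Phi> c :: "nat \<Rightarrow> real"
  assumes descent: "\<And>j. a j \<le> \<Phi> j - \<Phi> (Suc j) + c j" and lower: "\<And>j. m \<le> \<Phi> j"
  shows "(\<Sum>j\<le>k. a j) \<le> \<Phi> 0 - m + (\<Sum>j\<le>k. c j)"
proof -
  have "(\<Sum>j\<le>k. a j) \<le> (\<Sum>j\<le>k. \<Phi> j - \<Phi> (Suc j) + c j)"
    by (rule sum_mono) (rule descent)
  also have "\<dots> = \<Phi> 0 - \<Phi> (Suc k) + (\<Sum>j\<le>k. c j)"
    by (simp add: sum.distrib sum_telescope)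
  finally show ?thesis using lower[of "Suc k"] by linarith
qed

theorem theorem1:
  fixes F :: "'a::euclidean_space \<Rightarrow> real" and h :: "'a \<Rightarrow> ereal"
    and f_inf q \<rho> :: real
    and x g :: "nat \<Rightarrow> 'a" and \<delta> L \<alpha> :: "nat \<Rightarrow> real"
  assumes h_proper: "proper_fun h" and h_closed: "closed_fun h" and h_convex: "convex_fun h"
    and F_lsc: "lsc F"
    and f_lower: "\<forall>y \<in> edom h. ereal (F y) + h y \<ge> ereal f_inf"
    and q: "0 \<le> q" "q < 2" and rho: "\<rho> > 0"
    and x0: "x 0 \<in> edom h"
    and iter: "\<forall>k. x (Suc k) \<in> prox_set (\<alpha> k) h (x k - \<alpha> k *\<^sub>R g k)"
    and delta: "\<forall>k. \<delta> k \<ge> 0" and Lpos: "\<forall>k. L k > 0"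
    and inexact_orc: "\<forall>k. \<forall>y \<in> edom h. F y - (F (x k) + g k \<bullet> (y - x k))
                 \<le> L k / 2 * (norm (y - x k))\<^sup>2 + \<delta> k * norm (y - x k) powr q"
    and step: "\<forall>k. 0 < \<alpha> k \<and> \<alpha> k \<le> 1 / (L k + q * \<rho>)"
  shows "(\<forall>j. - (1 / \<alpha> j) *\<^sub>R (x (Suc j) - x j) - g j \<in> subdiff h (x (Suc j)))
       \<and> (\<forall>k. ereal (\<Sum>j\<le>k. \<alpha> j / 2 * (norm (g j + (- (1 / \<alpha> j) *\<^sub>R (x (Suc j) - x j) - g j)))\<^sup>2)
              \<le> ereal (F (x 0)) + h (x 0) - ereal f_inf
                 + ereal ((\<Sum>j\<le>k. (2 - q) * \<delta> j powr (2 / (2 - q))) / (2 * \<rho> powr (q / (2 - q)))))"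
proof -
  have dom: "x k \<in> edom h" for k
    using x0 iter by (cases k) (auto simp: prox_set_def)
  have hx: "h (x k) = ereal (real_of_ereal (h (x k)))" for k
    using proper_fun_edom_ereal[OF h_proper dom] .
  define \<Phi> where "\<Phi> k = F (x k) + real_of_ereal (h (x k))" for k
  define C where "C j = (2 - q) * \<delta> j powr (2 / (2 - q)) / (2 * \<rho> powr (q / (2 - q)))" for j
  have "\<alpha> j / 2 * (norm ((1 / \<alpha> j) *\<^sub>R (x (Suc j) - x j)))\<^sup>2 \<le> \<Phi> j - \<Phi> (Suc j) + C j" for j
    unfolding \<Phi>_def C_def using step delta inexact_orc dom iter
    by (intro prox_grad_step_decrease[OF h_proper h_convex hx _ _ _ _ q rho]) auto
  moreover have "f_inf \<le> \<Phi> k" for k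
    using f_lower dom[of k] hx[of k] unfolding \<Phi>_def by (metis ereal_less_eq(3) plus_ereal.simps(1))
  ultimately have "(\<Sum>j\<le>k. \<alpha> j / 2 * (norm ((1 / \<alpha> j) *\<^sub>R (x (Suc j) - x j)))\<^sup>2)
                     \<le> \<Phi> 0 - f_inf + (\<Sum>j\<le>k. C j)" for k
    by (rule sum_le_of_telescoping_descent)
  moreover have "- (1 / \<alpha> j) *\<^sub>R (x (Suc j) - x j) - g j \<in> subdiff h (x (Suc j))" for j
    using prox_set_subdiff[OF h_proper h_convex _ iter[rule_format, of j]] step[rule_format, of j]
    by (simp add: algebra_simps)
  ultimately show ?thesis
    by (subst hx) (simp add: \<Phi>_def C_def sum_divide_distrib)
qed

end
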